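(* Let $F$ be a rooted forest and let $B$ be a complete graph on at least $v(F)+e(F)$ vertices, all edges initially free. Then for any injective assignment of the roots of $F$ to vertices of $B$ fixed at the beginning, Waiter, playing the Waiter-Client game on $B$, can force a red copy $\bar F$ of $F$ within at most $e(F)$ rounds in such a way that (a) every root is mapped to its assigned vertex; (b) every colored edge has an endpoint in a non-leaf of $\bar F$; (c) all blue edges between $V(\bar F)$ and $V(B)\setminus V(\bar F)$ form a star forest such that every star is centered at a vertex $u\in V(\bar F)$ and has at most $\deg_{\bar F}(u)$ edges.
   Context: Waiter-Client game on $B$: in each round Waiter offers two free edges of $B$, Client colors one red and the other becomes blue. A rooted forest is a forest each of whose components contains exactly one designated vertex called a root. A leaf is a vertex of degree 1 that is not a root; leaves of $\bar F$ are the images of leaves of $F$. $v(F)$, $e(F)$ denote numbers of vertices and edges. *)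

theory Defs
  imports Main
begin

definition simple_graph :: "'a set \<Rightarrow> 'a set set \<Rightarrow> bool" where
  "simple_graph V E \<longleftrightarrow> finite V \<and> (\<forall>e\<in>E. e \<subseteq> V \<and> card e = 2)"

definition adj :: "'a set set \<Rightarrow> 'a \<Rightarrow> 'a \<Rightarrow> bool" where
  "adj E u v \<longleftrightarrow> {u, v} \<in> E"

definition degree :: "'a set set \<Rightarrow> 'a \<Rightarrow> nat" where
  "degree E v = card {e \<in> E. v \<in> e}"

definition is_cycle :: "'a set set \<Rightarrow> 'a list \<Rightarrow> bool" where
  "is_cycle E xs \<longleftrightarrow> length xs \<ge> 3 \<and> distinct xs \<and>
     (\<forall>i. Suc i < length xs \<longrightarrow> adj E (xs ! i) (xs ! Suc i)) \<and>
     adj E (last xs) (hd xs)"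

definition forest :: "'a set \<Rightarrow> 'a set set \<Rightarrow> bool" where
  "forest V E \<longleftrightarrow> simple_graph V E \<and> \<not> (\<exists>xs. is_cycle E xs)"

definition connected_in :: "'a set set \<Rightarrow> 'a \<Rightarrow> 'a \<Rightarrow> bool" where
  "connected_in E u v \<longleftrightarrow> (u, v) \<in> {(x, y). adj E x y}\<^sup>*"

definition rooted_forest :: "'a set \<Rightarrow> 'a set set \<Rightarrow> 'a set \<Rightarrow> bool" where
  "rooted_forest V E Rt \<longleftrightarrow> forest V E \<and> Rt \<subseteq> V \<and>
     (\<forall>v\<in>V. \<exists>!r. r \<in> Rt \<and> connected_in E v r)"

definition leaves :: "'a set \<Rightarrow> 'a set set \<Rightarrow> 'a set \<Rightarrow> 'a set" where
  "leaves V E Rt = {v \<in> V. degree E v = 1 \<and> v \<notin> Rt}"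

definition complete_edges :: "'b set \<Rightarrow> 'b set set" where
  "complete_edges V = {e. e \<subseteq> V \<and> card e = 2}"

text \<open>In each round Waiter offers two distinct free edges, Client colours one of them red
  and the other becomes blue.\<close>
fun wc_forces :: "('b set set \<Rightarrow> 'b set set \<Rightarrow> bool) \<Rightarrow> 'b set set \<Rightarrow> nat
                   \<Rightarrow> 'b set set \<Rightarrow> 'b set set \<Rightarrow> bool" where
  "wc_forces P Bd 0 R Bl = P R Bl"
| "wc_forces P Bd (Suc n) R Bl =
     (P R Bl \<or>
      (\<exists>e1 e2. e1 \<in> Bd - (R \<union> Bl) \<and> e2 \<in> Bd - (R \<union> Bl) \<and> e1 \<noteq> e2 \<and>
         wc_forces P Bd n (insert e1 R) (insert e2 Bl) \<and>
         wc_forces P Bd n (insert e2 R) (insert e1 Bl)))"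

text \<open>S is a star forest all of whose stars are centred at vertices of C, and the star
  centred at u has at most d u edges: every edge is assigned a centre (one of its endpoints,
  lying in C); stars with different centres are vertex-disjoint.\<close>
definition centered_star_forest :: "'b set set \<Rightarrow> 'b set \<Rightarrow> ('b \<Rightarrow> nat) \<Rightarrow> bool" where
  "centered_star_forest S C d \<longleftrightarrow>
     (\<exists>c. (\<forall>e\<in>S. c e \<in> e \<and> c e \<in> C) \<and>
          (\<forall>e\<in>S. \<forall>e'\<in>S. c e \<noteq> c e' \<longrightarrow> e \<inter> e' = {}) \<and>
          (\<forall>u\<in>C. card {e\<in>S. c e = u} \<le> d u))"

definition good_copy :: "'a set \<Rightarrow> 'a set set \<Rightarrow> 'a set \<Rightarrow> ('a \<Rightarrow> 'b) \<Rightarrow> 'b set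
                          \<Rightarrow> 'b set set \<Rightarrow> 'b set set \<Rightarrow> ('a \<Rightarrow> 'b) \<Rightarrow> bool" where
  "good_copy VF EF Rt \<rho> VB R Bl \<phi> \<longleftrightarrow>
     (let Vc = \<phi> ` VF; Ec = (\<lambda>e. \<phi> ` e) ` EF; nonleaf = Vc - \<phi> ` leaves VF EF Rt;
          S = {e \<in> Bl. e \<inter> Vc \<noteq> {} \<and> e \<inter> (VB - Vc) \<noteq> {}} in
       inj_on \<phi> VF \<and> \<phi> ` VF \<subseteq> VB \<and> Ec \<subseteq> R \<and>
       (\<forall>r\<in>Rt. \<phi> r = \<rho> r) \<and>
       (\<forall>e\<in>R \<union> Bl. e \<inter> nonleaf \<noteq> {}) \<and>
       centered_star_forest S Vc (degree Ec))"

end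

theory Submission
  imports Defs "HOL-Library.Transitive_Closure_Table"
begin

text \<open>Waiter embeds F greedily, starting from the assigned images of the roots. As long
  as some vertex w of F is not embedded, some edge uw of F leaves the embedded set W
  (every component contains a root), and it is the only forest edge from W to w (a second
  one would close a cycle). Waiter offers the edges from the image of u to two unused
  vertices x, y of B: the red one embeds w, the blue one is charged to the new edge uw
  at the centre u, which is not a leaf. Unused vertices never run out: while w is missing,
  at most |W| + #blue \<le> (v(F) - 1) + (e(F) - 1) vertices of B have been used.\<close>

definition induced_edges :: "'a set set \<Rightarrow> 'a set \<Rightarrow> 'a set set" where
  "induced_edges E W = {e \<in> E. e \<subseteq> W}"

lemma induced_edges_subset: "induced_edges E W \<subseteq> E"
  by (auto simp: induced_edges_def)

lemma induced_edges_mono: "W \<subseteq> W' \<Longrightarrow> induced_edges E W \<subseteq> induced_edges E W'"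
  by (auto simp: induced_edges_def)

lemma induced_edges_all: "(\<And>e. e \<in> E \<Longrightarrow> e \<subseteq> V) \<Longrightarrow> induced_edges E V = E"
  by (auto simp: induced_edges_def)

lemma adj_commute: "adj E u v \<longleftrightarrow> adj E v u"
  by (simp add: adj_def insert_commute)

lemma adj_mono: "E \<subseteq> E' \<Longrightarrow> adj E u v \<Longrightarrow> adj E' u v"
  by (auto simp: adj_def)

lemma degree_insert:
  assumes "finite F" "f \<notin> F"
  shows "degree (insert f F) v = (if v \<in> f then Suc (degree F v) else degree F v)"
proof -
  have "{e \<in> insert f F. v \<in> e} = (if v \<in> f then insert f {e \<in> F. v \<in> e} else {e \<in> F. v \<in> e})"
    by auto
  then show ?thesis using assms by (simp add: degree_def)
qed

lemma degree_image:
  assumes "inj_on \<phi> V" "\<And>e. e \<in> F \<Longrightarrow> e \<subseteq> V" "v \<in> V"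
  shows "degree ((\<lambda>e. \<phi> ` e) ` F) (\<phi> v) = degree F v"
proof -
  have mem: "\<phi> v \<in> \<phi> ` e \<longleftrightarrow> v \<in> e" if "e \<in> F" for e
    using inj_on_image_mem_iff[OF assms(1,3) assms(2)[OF that]] .
  have "{e' \<in> (\<lambda>e. \<phi> ` e) ` F. \<phi> v \<in> e'} = (\<lambda>e. \<phi> ` e) ` {e \<in> F. v \<in> e}"
  proof (intro equalityI subsetI)
    fix e' assume "e' \<in> {e' \<in> (\<lambda>e. \<phi> ` e) ` F. \<phi> v \<in> e'}"
    then obtain e where "e \<in> F" "e' = \<phi> ` e" "\<phi> v \<in> \<phi> ` e" by blast
    then show "e' \<in> (\<lambda>e. \<phi> ` e) ` {e \<in> F. v \<in> e}" using mem by blast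
  qed auto
  moreover have "inj_on (\<lambda>e. \<phi> ` e) {e \<in> F. v \<in> e}"
    by (rule inj_on_subset[OF inj_on_image_Pow[OF assms(1)]]) (use assms(2) in auto)
  ultimately show ?thesis by (simp add: degree_def card_image)
qed

lemma connected_in_iff_rtranclp: "connected_in E u v \<longleftrightarrow> (adj E)\<^sup>*\<^sup>* u v"
  by (simp add: connected_in_def rtranclp_rtrancl_eq)

lemma connected_in_refl: "connected_in E v v"
  by (simp add: connected_in_iff_rtranclp)

lemma connected_in_edge: "{u, v} \<in> E \<Longrightarrow> connected_in E u v"
  by (simp add: connected_in_iff_rtranclp adj_def r_into_rtranclp)

lemma connected_in_sym: "connected_in E u v \<Longrightarrow> connected_in E v u"
  using symp_rtranclp[of "adj E"] by (simp add: connected_in_iff_rtranclp symp_def adj_commute)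

lemma connected_in_trans: "connected_in E u v \<Longrightarrow> connected_in E v w \<Longrightarrow> connected_in E u w"
  by (simp add: connected_in_iff_rtranclp)

lemma connected_in_mono: "E \<subseteq> E' \<Longrightarrow> connected_in E u v \<Longrightarrow> connected_in E' u v"
  unfolding connected_in_iff_rtranclp by (rule mono_rtranclp[rule_format]) (auto intro: adj_mono)

lemma connected_in_crossing_edge:
  assumes "connected_in E a b" "a \<notin> W" "b \<in> W"
  obtains u w where "{u, w} \<in> E" "u \<in> W" "w \<notin> W"
  using assms(1)[unfolded connected_in_iff_rtranclp] assms(2,3) that
proof (induction arbitrary: thesis rule: converse_rtranclp_induct)
  case (step a z)
  show ?case
  proof (cases "z \<in> W")
    case True
    have "{z, a} \<in> E" using step(1) by (simp add: adj_def insert_commute)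
    with True step show ?thesis by blast
  qed (use step in blast)
qed simp

lemma is_cycle_through_outside_vertex:
  assumes "{u, w} \<in> E" "{u', w} \<in> E" "u \<in> W" "w \<notin> W" "u \<noteq> u'"
    and "connected_in (induced_edges E W) u u'"
  shows "\<exists>xs. is_cycle E xs"
proof -
  let ?F = "induced_edges E W"
  obtain xs where path: "rtrancl_path (adj ?F) u xs u'" and dist: "distinct (u # xs)"
    using assms(6) rtrancl_path_distinct
    by (metis connected_in_iff_rtranclp rtranclp_eq_rtrancl_path)
  have "xs \<noteq> []" using path assms(5) by (auto elim: rtrancl_path.cases)
  have "set xs \<subseteq> W"
    using rtrancl_path_Range[OF path] by (fastforce simp: adj_def induced_edges_def)
  have "is_cycle E (w # u # xs)"
    unfolding is_cycle_def
  proof (intro conjI allI impI)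
    show "3 \<le> length (w # u # xs)" using \<open>xs \<noteq> []\<close> by (cases xs) auto
    show "distinct (w # u # xs)" using dist \<open>set xs \<subseteq> W\<close> assms(3,4) by auto
    show "adj E (last (w # u # xs)) (hd (w # u # xs))"
      using rtrancl_path_last[OF path \<open>xs \<noteq> []\<close>] \<open>xs \<noteq> []\<close> assms(2) by (simp add: adj_def)
  next
    fix i assume "Suc i < length (w # u # xs)"
    then show "adj E ((w # u # xs) ! i) ((w # u # xs) ! Suc i)"
      using rtrancl_path_nth[OF path] assms(1) induced_edges_subset
      by (cases i) (auto simp: adj_commute adj_def intro: adj_mono)
  qed
  then show ?thesis ..
qed

lemma rooted_forestD:
  assumes "rooted_forest VF EF Rt"
  shows "forest VF EF" "finite VF" "Rt \<subseteq> VF"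
    and "\<And>e. e \<in> EF \<Longrightarrow> e \<subseteq> VF \<and> card e = 2"
    and "\<And>v. v \<in> VF \<Longrightarrow> \<exists>!r. r \<in> Rt \<and> connected_in EF v r"
  using assms by (simp_all add: rooted_forest_def forest_def simple_graph_def)

lemma rooted_forest_finite_edges:
  assumes "rooted_forest VF EF Rt"
  shows "finite EF"
proof (rule finite_subset)
  show "EF \<subseteq> Pow VF" using rooted_forestD(4)[OF assms] by blast
  show "finite (Pow VF)" using rooted_forestD(2)[OF assms] by simp
qed

lemma rooted_forest_root:
  assumes "rooted_forest VF EF Rt" "v \<in> VF"
  obtains r where "r \<in> Rt" "connected_in EF v r"
  using ex1_implies_ex[OF rooted_forestD(5)[OF assms]] by blast

lemma rooted_forest_roots_eq:
  assumes rf: "rooted_forest VF EF Rt" and "r \<in> Rt" "r' \<in> Rt" "connected_in EF r r'"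
  shows "r = r'"
proof -
  have "r \<in> VF" using rooted_forestD(3)[OF rf] \<open>r \<in> Rt\<close> by blast
  then obtain r0 where "\<And>y. y \<in> Rt \<and> connected_in EF r y \<Longrightarrow> y = r0"
    using rooted_forestD(5)[OF rf \<open>r \<in> VF\<close>] by (elim ex1E) blast
  then show ?thesis using assms(2-4) connected_in_refl by metis
qed

lemma induced_edges_roots:
  assumes "rooted_forest VF EF Rt"
  shows "induced_edges EF Rt = {}"
proof (rule ccontr)
  assume "induced_edges EF Rt \<noteq> {}"
  then obtain e where e: "e \<in> EF" "e \<subseteq> Rt" by (auto simp: induced_edges_def)
  then obtain a b where "e = {a, b}" "a \<noteq> b"
    using rooted_forestD(4)[OF assms, of e] by (auto simp: card_2_iff)
  with e have ab: "{a, b} \<in> EF" "a \<in> Rt" "b \<in> Rt" by auto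
  show False
    using rooted_forest_roots_eq[OF assms ab(2,3) connected_in_edge[OF ab(1)]] \<open>a \<noteq> b\<close> by simp
qed

text \<open>Two adjacent leaves would form a component without a root.\<close>
lemma rooted_forest_edge_not_leaves:
  assumes rf: "rooted_forest VF EF Rt" and e: "e \<in> EF"
  shows "\<not> e \<subseteq> leaves VF EF Rt"
proof
  assume leaves: "e \<subseteq> leaves VF EF Rt"
  have closed: "z \<in> e" if "(adj EF)\<^sup>*\<^sup>* a z" "a \<in> e" for a z
    using that
  proof (induction rule: rtranclp_induct)
    case (step y z)
    have "degree EF y = 1" using leaves step.IH[OF step.prems] by (auto simp: leaves_def)
    then obtain e' where "{e'' \<in> EF. y \<in> e''} = {e'}"
      unfolding degree_def by (rule card_1_singletonE)
    moreover have "e \<in> {e'' \<in> EF. y \<in> e''}" "{y, z} \<in> {e'' \<in> EF. y \<in> e''}"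
      using e step by (auto simp: adj_def)
    ultimately have "{y, z} = e" by simp
    then show ?case by blast
  qed
  obtain a where "a \<in> e" using rooted_forestD(4)[OF rf e] by (auto simp: card_2_iff)
  moreover have "a \<in> VF" using rooted_forestD(4)[OF rf e] \<open>a \<in> e\<close> by blast
  then obtain r where "r \<in> Rt" "connected_in EF a r" by (rule rooted_forest_root[OF rf])
  ultimately have "r \<in> Rt" "r \<in> e" using closed by (auto simp: connected_in_iff_rtranclp)
  then show False using leaves by (auto simp: leaves_def)
qed

lemma rooted_forest_crossing_edge:
  assumes rf: "rooted_forest VF EF Rt" and "Rt \<subseteq> W" "W \<subseteq> VF" "W \<noteq> VF"
  obtains u w where "{u, w} \<in> EF" "u \<in> W" "w \<notin> W"
proof -
  obtain v where "v \<in> VF" "v \<notin> W" using assms(3,4) by blast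
  obtain r where "r \<in> Rt" "connected_in EF v r" by (rule rooted_forest_root[OF rf \<open>v \<in> VF\<close>])
  then show thesis
    using connected_in_crossing_edge[OF \<open>connected_in EF v r\<close> \<open>v \<notin> W\<close>] assms(2) that by blast
qed

definition root_connected :: "'a set set \<Rightarrow> 'a set \<Rightarrow> 'a set \<Rightarrow> bool" where
  "root_connected E Rt W \<longleftrightarrow> Rt \<subseteq> W \<and> (\<forall>v\<in>W. \<exists>r\<in>Rt. connected_in (induced_edges E W) v r)"

lemma root_connected_roots: "root_connected E Rt Rt"
  by (auto simp: root_connected_def intro: connected_in_refl)

lemma root_connected_insert:
  assumes "root_connected E Rt W" "{u, w} \<in> E" "u \<in> W"
  shows "root_connected E Rt (insert w W)"
proof -
  let ?F' = "induced_edges E (insert w W)"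
  have mono: "connected_in (induced_edges E W) v r \<Longrightarrow> connected_in ?F' v r" for v r
    by (rule connected_in_mono[OF induced_edges_mono]) auto
  have wu: "connected_in ?F' w u"
    using assms(2,3) by (intro connected_in_edge) (auto simp: induced_edges_def insert_commute)
  show ?thesis
    unfolding root_connected_def
  proof (intro conjI ballI)
    show "Rt \<subseteq> insert w W" using assms(1) by (auto simp: root_connected_def)
  next
    fix v assume "v \<in> insert w W"
    then consider "v = w" | "v \<in> W" by blast
    then show "\<exists>r\<in>Rt. connected_in ?F' v r"
    proof cases
      case 1
      then show ?thesis
        using assms(1,3) mono connected_in_trans[OF wu] unfolding root_connected_def by blast
    next
      case 2
      then show ?thesis using assms(1) mono unfolding root_connected_def by blast
    qed
  qed
qed

lemma crossing_edge_not_leaf: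
  assumes "root_connected E Rt W" "{u, w} \<in> E" "u \<in> W" "w \<notin> W"
  shows "u \<notin> leaves V E Rt"
proof
  assume leaf: "u \<in> leaves V E Rt"
  obtain r where "r \<in> Rt" "connected_in (induced_edges E W) u r"
    using assms(1,3) by (auto simp: root_connected_def)
  moreover have "r \<noteq> u" using leaf \<open>r \<in> Rt\<close> by (auto simp: leaves_def)
  ultimately obtain z where "adj (induced_edges E W) u z"
    unfolding connected_in_iff_rtranclp by (blast elim: converse_rtranclpE)
  then have z: "{u, z} \<in> {e \<in> E. u \<in> e}" "{u, z} \<subseteq> W"
    by (auto simp: adj_def induced_edges_def)
  have "card {e \<in> E. u \<in> e} = 1" using leaf by (simp add: leaves_def degree_def)
  then obtain e where "{e \<in> E. u \<in> e} = {e}" by (rule card_1_singletonE)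
  moreover have "{u, w} \<in> {e \<in> E. u \<in> e}" using assms(2) by simp
  ultimately have "{u, z} = {u, w}" using z(1) by simp
  then show False using z(2) assms(4) by blast
qed

text \<open>A second edge from W to w would close a cycle through the roots of its endpoints.\<close>
lemma induced_edges_insert_crossing:
  assumes rf: "rooted_forest VF EF Rt" and W: "root_connected EF Rt W"
    and uw: "{u, w} \<in> EF" "u \<in> W" "w \<notin> W"
  shows "induced_edges EF (insert w W) = insert {u, w} (induced_edges EF W)"
proof (intro equalityI subsetI)
  let ?F = "induced_edges EF W"
  fix e assume e: "e \<in> induced_edges EF (insert w W)"
  show "e \<in> insert {u, w} ?F"
  proof (cases "e \<subseteq> W")
    case False
    then have "w \<in> e" "e \<in> EF" "e \<subseteq> insert w W" using e by (auto simp: induced_edges_def)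
    obtain a b where ab: "e = {a, b}" "a \<noteq> b"
      using rooted_forestD(4)[OF rf \<open>e \<in> EF\<close>] by (auto simp: card_2_iff)
    then have "e = {a, w} \<and> a \<noteq> w \<or> e = {b, w} \<and> b \<noteq> w" using \<open>w \<in> e\<close> by auto
    then obtain u' where "e = {u', w}" "u' \<noteq> w" by blast
    then have u': "e = {u', w}" "u' \<in> W" using \<open>e \<subseteq> insert w W\<close> by auto
    have "u' = u"
    proof (rule ccontr)
      assume "u' \<noteq> u"
      obtain r where r: "r \<in> Rt" "connected_in ?F u r"
        using W uw(2) unfolding root_connected_def by blast
      obtain r' where r': "r' \<in> Rt" "connected_in ?F u' r'"
        using W u'(2) unfolding root_connected_def by blast
      have "connected_in EF u r" "connected_in EF u' r'"
        using connected_in_mono[OF induced_edges_subset r(2)]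
          connected_in_mono[OF induced_edges_subset r'(2)] .
      moreover have "{w, u'} \<in> EF" using u'(1) \<open>e \<in> EF\<close> by (simp add: insert_commute)
      ultimately have "connected_in EF r r'"
        using connected_in_edge[OF uw(1)] connected_in_edge[of w u' EF]
        by (meson connected_in_sym connected_in_trans)
      then have "r = r'" by (rule rooted_forest_roots_eq[OF rf r(1) r'(1)])
      then have "connected_in ?F r u'" using connected_in_sym[OF r'(2)] by simp
      then have "connected_in ?F u u'" by (rule connected_in_trans[OF r(2)])
      then have "\<exists>xs. is_cycle EF xs"
        using is_cycle_through_outside_vertex[OF uw(1) _ uw(2,3)] u' \<open>e \<in> EF\<close> \<open>u' \<noteq> u\<close>
        by blast
      then show False using rooted_forestD(1)[OF rf] by (simp add: forest_def)
    qed
    then show ?thesis using u' by simp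
  qed (use e in \<open>auto simp: induced_edges_def\<close>)
qed (use uw in \<open>auto simp: induced_edges_def\<close>)

definition partial_copy :: "'a set \<Rightarrow> 'a set set \<Rightarrow> 'a set \<Rightarrow> ('a \<Rightarrow> 'b) \<Rightarrow> 'b set
    \<Rightarrow> 'a set \<Rightarrow> ('a \<Rightarrow> 'b) \<Rightarrow> 'b set set \<Rightarrow> bool" where
  "partial_copy VF EF Rt \<rho> VB W \<phi> R \<longleftrightarrow>
     root_connected EF Rt W \<and> W \<subseteq> VF \<and> inj_on \<phi> W \<and> \<phi> ` W \<subseteq> VB \<and>
     (\<forall>r\<in>Rt. \<phi> r = \<rho> r) \<and> R = (\<lambda>e. \<phi> ` e) ` induced_edges EF W"

lemma partial_copy_roots:
  assumes "rooted_forest VF EF Rt" "inj_on \<rho> Rt" "\<rho> ` Rt \<subseteq> VB"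
  shows "partial_copy VF EF Rt \<rho> VB Rt \<rho> {}"
  using assms rooted_forestD(3)[OF assms(1)] induced_edges_roots[OF assms(1)] root_connected_roots
  by (simp add: partial_copy_def)

lemma partial_copy_extend:
  assumes rf: "rooted_forest VF EF Rt" and pc: "partial_copy VF EF Rt \<rho> VB W \<phi> R"
    and uw: "{u, w} \<in> EF" "u \<in> W" "w \<notin> W" and x: "x \<in> VB" "x \<notin> \<phi> ` W"
  shows "partial_copy VF EF Rt \<rho> VB (insert w W) (\<phi>(w := x)) (insert {\<phi> u, x} R)"
proof -
  have W: "root_connected EF Rt W" "W \<subseteq> VF" "inj_on \<phi> W" "\<phi> ` W \<subseteq> VB"
    "\<forall>r\<in>Rt. \<phi> r = \<rho> r" "R = (\<lambda>e. \<phi> ` e) ` induced_edges EF W"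
    using pc by (simp_all add: partial_copy_def)
  have "w \<in> VF" "u \<noteq> w" using rooted_forestD(4)[OF rf uw(1)] by auto
  have same: "\<phi>(w := x) ` e = \<phi> ` e" if "e \<subseteq> W" for e
    using that uw(3) by (auto simp: fun_upd_image)
  have "(\<lambda>e. \<phi>(w := x) ` e) ` induced_edges EF W = R"
    unfolding W(6) by (rule image_cong[OF refl same]) (simp add: induced_edges_def)
  moreover have "\<phi>(w := x) ` {u, w} = {\<phi> u, x}" using \<open>u \<noteq> w\<close> by simp
  ultimately have red: "insert {\<phi> u, x} R = (\<lambda>e. \<phi>(w := x) ` e) ` induced_edges EF (insert w W)"
    by (simp add: induced_edges_insert_crossing[OF rf W(1) uw])
  have inj: "inj_on (\<phi>(w := x)) (insert w W)"
  proof (rule inj_on_insert[THEN iffD2], intro conjI)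
    show "inj_on (\<phi>(w := x)) W" by (rule inj_on_fun_updI[OF W(3) x(2)])
    show "(\<phi>(w := x)) w \<notin> \<phi>(w := x) ` (W - {w})" using x(2) by auto
  qed
  have img: "\<phi>(w := x) ` insert w W \<subseteq> VB" using W(4) x(1) uw(3) by auto
  have roots: "\<forall>r\<in>Rt. (\<phi>(w := x)) r = \<rho> r"
    using W(1,5) uw(3) by (auto simp: root_connected_def)
  show ?thesis
    unfolding partial_copy_def
  proof (intro conjI)
    show "insert w W \<subseteq> VF" using W(2) \<open>w \<in> VF\<close> by simp
  qed (fact root_connected_insert[OF W(1) uw(1,2)] inj img roots red)+
qed

text \<open>ctr e is the forest vertex at whose image the blue edge e was offered, and far e
  is its other endpoint, which was unused at that moment; F holds the forest edges embedded
  so far, one per round.\<close>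
definition blue_stars :: "'a set \<Rightarrow> ('a \<Rightarrow> 'b) \<Rightarrow> 'a set set \<Rightarrow> 'b set \<Rightarrow> 'b set set
    \<Rightarrow> ('b set \<Rightarrow> 'a) \<Rightarrow> ('b set \<Rightarrow> 'b) \<Rightarrow> bool" where
  "blue_stars C \<phi> F VB Bl ctr far \<longleftrightarrow>
     finite Bl \<and> card Bl = card F \<and> inj_on far Bl \<and>
     (\<forall>e\<in>Bl. {\<phi> (ctr e), far e} = e \<and> ctr e \<in> C \<and> far e \<in> VB) \<and>
     (\<forall>v. card {e \<in> Bl. ctr e = v} \<le> degree F v)"

lemma blue_stars_empty: "blue_stars C \<phi> {} VB {} ctr far"
  by (simp add: blue_stars_def)

lemma blue_stars_not_mem:
  assumes "blue_stars C \<phi> F VB Bl ctr far" "z \<notin> \<phi> ` C" "z \<notin> far ` Bl" "z \<in> e"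
  shows "e \<notin> Bl"
proof
  assume "e \<in> Bl"
  then have "{\<phi> (ctr e), far e} = e" "ctr e \<in> C" using assms(1) by (auto simp: blue_stars_def)
  then have "z \<in> {\<phi> (ctr e), far e}" using assms(4) by simp
  then show False using assms(2,3) \<open>e \<in> Bl\<close> \<open>ctr e \<in> C\<close> by auto
qed

lemma blue_stars_extend:
  assumes bs: "blue_stars C \<phi> F VB Bl ctr far"
    and C: "C \<subseteq> C'" "\<forall>v\<in>C. \<phi>' v = \<phi> v" "u \<in> C'"
    and F: "finite F" "f \<notin> F" "u \<in> f"
    and y: "y \<in> VB" "y \<notin> \<phi> ` C" "y \<notin> far ` Bl"
  defines "b \<equiv> {\<phi>' u, y}"
  shows "blue_stars C' \<phi>' (insert f F) VB (insert b Bl) (ctr(b := u)) (far(b := y))"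
proof -
  have B: "finite Bl" "card Bl = card F" "inj_on far Bl"
    "\<forall>e\<in>Bl. {\<phi> (ctr e), far e} = e \<and> ctr e \<in> C \<and> far e \<in> VB"
    "\<forall>v. card {e \<in> Bl. ctr e = v} \<le> degree F v"
    using bs by (simp_all add: blue_stars_def)
  have "b \<notin> Bl" using blue_stars_not_mem[OF bs y(2,3)] by (simp add: b_def)
  have "card (insert b Bl) = card (insert f F)" using B(1,2) F(1,2) \<open>b \<notin> Bl\<close> by simp
  moreover have "inj_on (far(b := y)) (insert b Bl)"
    using B(3) y(3) \<open>b \<notin> Bl\<close> by (auto simp: inj_on_def)
  moreover have "\<forall>e\<in>insert b Bl. e = {\<phi>' ((ctr(b := u)) e), (far(b := y)) e} \<and>
      (ctr(b := u)) e \<in> C' \<and> (far(b := y)) e \<in> VB"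
  proof
    fix e assume "e \<in> insert b Bl"
    then consider "e = b" | "e \<in> Bl" "e \<noteq> b" by blast
    then show "e = {\<phi>' ((ctr(b := u)) e), (far(b := y)) e} \<and>
      (ctr(b := u)) e \<in> C' \<and> (far(b := y)) e \<in> VB"
    proof cases
      case 2
      then show ?thesis using B(4) C(1,2) by auto
    qed (use C(3) y(1) b_def in auto)
  qed
  moreover have "card {e \<in> insert b Bl. (ctr(b := u)) e = v} \<le> degree (insert f F) v" for v
  proof -
    have "{e \<in> insert b Bl. (ctr(b := u)) e = v} =
        (if v = u then insert b {e \<in> Bl. ctr e = v} else {e \<in> Bl. ctr e = v})"
      using \<open>b \<notin> Bl\<close> by auto
    then show ?thesis
      using B(1,5) \<open>b \<notin> Bl\<close> degree_insert[OF F(1,2)] F(3) by (simp add: le_SucI)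
  qed
  ultimately show ?thesis unfolding blue_stars_def using B(1) by blast
qed

lemma centered_star_forest_blue_stars:
  assumes bs: "blue_stars C \<phi> F VB Bl ctr far"
    and V: "inj_on \<phi> V" "C \<subseteq> V" "\<And>e. e \<in> F \<Longrightarrow> e \<subseteq> V"
  defines "S \<equiv> {e \<in> Bl. e \<inter> \<phi> ` V \<noteq> {} \<and> e \<inter> (VB - \<phi> ` V) \<noteq> {}}"
  shows "centered_star_forest S (\<phi> ` V) (degree ((\<lambda>e. \<phi> ` e) ` F))"
proof -
  have B: "finite Bl" "inj_on far Bl"
    "\<forall>e\<in>Bl. {\<phi> (ctr e), far e} = e \<and> ctr e \<in> C \<and> far e \<in> VB"
    "\<forall>v. card {e \<in> Bl. ctr e = v} \<le> degree F v"
    using bs by (simp_all add: blue_stars_def)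
  have S: "e \<in> Bl" "{\<phi> (ctr e), far e} = e" "ctr e \<in> V" if "e \<in> S" for e
    using that B(3) V(2) by (auto simp: S_def)
  have far: "far e \<notin> \<phi> ` V" if e: "e \<in> S" for e
  proof -
    obtain z where "z \<in> e" "z \<notin> \<phi> ` V" using e unfolding S_def by blast
    moreover have "z \<in> {\<phi> (ctr e), far e}" using \<open>z \<in> e\<close> S(2)[OF e] by simp
    ultimately show ?thesis using S(3)[OF e] by auto
  qed
  show ?thesis
    unfolding centered_star_forest_def
  proof (intro exI[of _ "\<lambda>e. \<phi> (ctr e)"] conjI ballI impI)
    fix e assume "e \<in> S"
    then show "\<phi> (ctr e) \<in> e" "\<phi> (ctr e) \<in> \<phi> ` V" using S by blast+
  next
    fix e e' assume e: "e \<in> S" "e' \<in> S" "\<phi> (ctr e) \<noteq> \<phi> (ctr e')"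
    then have "e \<noteq> e'" by auto
    then have "far e \<noteq> far e'" using inj_onD[OF B(2) _ S(1)[OF e(1)] S(1)[OF e(2)]] by blast
    moreover have "\<phi> (ctr e) \<in> \<phi> ` V" "\<phi> (ctr e') \<in> \<phi> ` V" using S(3) e by blast+
    ultimately have "{\<phi> (ctr e), far e} \<inter> {\<phi> (ctr e'), far e'} = {}"
      using far[OF e(1)] far[OF e(2)] e(3) by auto
    then show "e \<inter> e' = {}" using S(2)[OF e(1)] S(2)[OF e(2)] by simp
  next
    fix z assume "z \<in> \<phi> ` V"
    then obtain v where v: "v \<in> V" "z = \<phi> v" by blast
    have "{e \<in> S. \<phi> (ctr e) = z} \<subseteq> {e \<in> Bl. ctr e = v}"
    proof (intro subsetI CollectI conjI)
      fix e assume "e \<in> {e \<in> S. \<phi> (ctr e) = z}"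
      then show "e \<in> Bl" "ctr e = v" using S(1,3) inj_onD[OF V(1) _ _ v(1)] v(2) by auto
    qed
    then have "card {e \<in> S. \<phi> (ctr e) = z} \<le> card {e \<in> Bl. ctr e = v}"
      using B(1) by (intro card_mono) auto
    also have "\<dots> \<le> degree F v" using B(4) by blast
    also have "\<dots> = degree ((\<lambda>e. \<phi> ` e) ` F) z"
      using degree_image[OF V(1) V(3) v(1)] v(2) by simp
    finally show "card {e \<in> S. \<phi> (ctr e) = z} \<le> degree ((\<lambda>e. \<phi> ` e) ` F) z" .
  qed
qed

lemma good_copy_if_complete:
  assumes rf: "rooted_forest VF EF Rt" and pc: "partial_copy VF EF Rt \<rho> VB VF \<phi> R"
    and blue: "blue_stars (VF - leaves VF EF Rt) \<phi> (induced_edges EF VF) VB Bl ctr far"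
  shows "good_copy VF EF Rt \<rho> VB R Bl \<phi>"
proof -
  have edges: "\<And>e. e \<in> EF \<Longrightarrow> e \<subseteq> VF" using rooted_forestD(4)[OF rf] by blast
  have bs: "blue_stars (VF - leaves VF EF Rt) \<phi> EF VB Bl ctr far"
    using blue induced_edges_all[OF edges] by simp
  have P: "inj_on \<phi> VF" "\<phi> ` VF \<subseteq> VB" "\<forall>r\<in>Rt. \<phi> r = \<rho> r" "R = (\<lambda>e. \<phi> ` e) ` EF"
    using pc induced_edges_all[OF edges] by (simp_all add: partial_copy_def)
  have nonleaf: "\<phi> a \<in> \<phi> ` VF - \<phi> ` leaves VF EF Rt" if "a \<in> VF" "a \<notin> leaves VF EF Rt" for a
    using that inj_on_image_mem_iff[OF P(1) that(1), of "leaves VF EF Rt"] by (auto simp: leaves_def)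
  have "e \<inter> (\<phi> ` VF - \<phi> ` leaves VF EF Rt) \<noteq> {}" if "e \<in> R \<union> Bl" for e
  proof (cases "e \<in> R")
    case True
    then obtain e0 where "e0 \<in> EF" "e = \<phi> ` e0" using P(4) by blast
    moreover obtain a where "a \<in> e0" "a \<notin> leaves VF EF Rt"
      using rooted_forest_edge_not_leaves[OF rf \<open>e0 \<in> EF\<close>] by blast
    ultimately show ?thesis using nonleaf[of a] edges by blast
  next
    case False
    then have "e \<in> Bl" using that by blast
    then have "{\<phi> (ctr e), far e} = e" "ctr e \<in> VF" "ctr e \<notin> leaves VF EF Rt"
      using bs by (auto simp: blue_stars_def)
    then show ?thesis using nonleaf[of "ctr e"] by blast
  qed
  moreover have "centered_star_forest {e \<in> Bl. e \<inter> \<phi> ` VF \<noteq> {} \<and> e \<inter> (VB - \<phi> ` VF) \<noteq> {}}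
      (\<phi> ` VF) (degree ((\<lambda>e. \<phi> ` e) ` EF))"
    using centered_star_forest_blue_stars[OF bs P(1) _ edges] by blast
  ultimately show ?thesis using P unfolding good_copy_def Let_def by blast
qed

lemma two_elements_outside:
  assumes "finite U" "card U + 2 \<le> card A"
  obtains x y where "x \<in> A - U" "y \<in> A - U" "x \<noteq> y"
proof -
  have "2 \<le> card (A - U)" using diff_card_le_card_Diff[OF assms(1), of A] assms(2) by linarith
  then obtain T where "T \<subseteq> A - U" "card T = 2" by (rule obtain_subset_with_card_n)
  then show thesis using that by (auto simp: card_2_iff)
qed

lemma two_unused_vertices:
  assumes VB: "finite VB" "card VF + card EF \<le> card VB"
    and W: "finite W" "card W < card VF"
    and bs: "blue_stars C \<phi> F VB Bl ctr far" and "card F < card EF"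
  obtains x y where "x \<in> VB - (\<phi> ` W \<union> far ` Bl)" "y \<in> VB - (\<phi> ` W \<union> far ` Bl)" "x \<noteq> y"
proof -
  have Bl: "finite Bl" "card Bl = card F" using bs by (simp_all add: blue_stars_def)
  have "card (\<phi> ` W \<union> far ` Bl) \<le> card (\<phi> ` W) + card (far ` Bl)" by (rule card_Un_le)
  also have "\<dots> \<le> card W + card F"
    using card_image_le[OF W(1), of \<phi>] card_image_le[OF Bl(1), of far] Bl(2) by linarith
  finally have "card (\<phi> ` W \<union> far ` Bl) + 2 \<le> card VB"
    using W(2) \<open>card F < card EF\<close> VB(2) by linarith
  moreover have "finite (\<phi> ` W \<union> far ` Bl)" using W(1) Bl(1) by simp
  ultimately show thesis using two_elements_outside that by blast
qed

lemma wc_forces_if_holds: "P R Bl \<Longrightarrow> wc_forces P Bd n R Bl"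
  by (cases n) simp_all

lemma wc_forces_SucI:
  assumes "e1 \<in> Bd - (R \<union> Bl)" "e2 \<in> Bd - (R \<union> Bl)" "e1 \<noteq> e2"
    and "wc_forces P Bd n (insert e1 R) (insert e2 Bl)" "wc_forces P Bd n (insert e2 R) (insert e1 Bl)"
  shows "wc_forces P Bd (Suc n) R Bl"
  using assms by auto

lemma fresh_edge_free:
  assumes pc: "partial_copy VF EF Rt \<rho> VB W \<phi> R"
    and bs: "blue_stars C \<phi> F VB Bl ctr far" and "C \<subseteq> W"
    and z: "u \<in> W" "z \<in> VB" "z \<notin> \<phi> ` W" "z \<notin> far ` Bl"
  shows "{\<phi> u, z} \<in> complete_edges VB - (R \<union> Bl)"
proof -
  have "\<phi> u \<in> VB" "\<phi> u \<noteq> z" using pc z(1,3) by (auto simp: partial_copy_def)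
  then have "{\<phi> u, z} \<in> complete_edges VB" using z(2) by (simp add: complete_edges_def)
  moreover have "{\<phi> u, z} \<notin> R"
  proof
    assume "{\<phi> u, z} \<in> R"
    then obtain e where "e \<subseteq> W" "{\<phi> u, z} = \<phi> ` e"
      using pc by (auto simp: partial_copy_def induced_edges_def)
    then have "z \<in> \<phi> ` W" by blast
    with z(3) show False by contradiction
  qed
  moreover have "{\<phi> u, z} \<notin> Bl"
    using blue_stars_not_mem[OF bs _ z(4)] \<open>C \<subseteq> W\<close> z(3) by blast
  ultimately show ?thesis by blast
qed

lemma waiter_round_invariant:
  assumes rf: "rooted_forest VF EF Rt" and pc: "partial_copy VF EF Rt \<rho> VB W \<phi> R"
    and bs: "blue_stars (W - leaves VF EF Rt) \<phi> (induced_edges EF W) VB Bl ctr far"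
    and uw: "{u, w} \<in> EF" "u \<in> W" "w \<notin> W"
    and a: "a \<in> VB" "a \<notin> \<phi> ` W" and b: "b \<in> VB" "b \<notin> \<phi> ` W" "b \<notin> far ` Bl"
  shows "partial_copy VF EF Rt \<rho> VB (insert w W) (\<phi>(w := a)) (insert {\<phi> u, a} R)"
    and "blue_stars (insert w W - leaves VF EF Rt) (\<phi>(w := a)) (induced_edges EF (insert w W)) VB
      (insert {\<phi> u, b} Bl) (ctr({\<phi> u, b} := u)) (far({\<phi> u, b} := b))"
proof -
  have W: "root_connected EF Rt W" using pc by (simp add: partial_copy_def)
  show "partial_copy VF EF Rt \<rho> VB (insert w W) (\<phi>(w := a)) (insert {\<phi> u, a} R)"
    by (rule partial_copy_extend[OF rf pc uw a])
  let ?L = "leaves VF EF Rt"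
  have "u \<noteq> w" using uw(2,3) by blast
  have "finite (induced_edges EF W)"
    using rooted_forest_finite_edges[OF rf] induced_edges_subset by (rule finite_subset[rotated])
  moreover have "{u, w} \<notin> induced_edges EF W" using uw(3) by (simp add: induced_edges_def)
  moreover have "u \<in> insert w W - ?L" using crossing_edge_not_leaf[OF W uw] uw(2) by blast
  moreover have "W - ?L \<subseteq> insert w W - ?L" "\<forall>v\<in>W - ?L. (\<phi>(w := a)) v = \<phi> v"
    "b \<notin> \<phi> ` (W - ?L)"
    using uw(3) b(2) by auto
  ultimately have "blue_stars (insert w W - ?L) (\<phi>(w := a)) (insert {u, w} (induced_edges EF W)) VB
      (insert {(\<phi>(w := a)) u, b} Bl) (ctr({(\<phi>(w := a)) u, b} := u)) (far({(\<phi>(w := a)) u, b} := b))"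
    using blue_stars_extend[OF bs] b(1,3) by blast
  then show "blue_stars (insert w W - ?L) (\<phi>(w := a)) (induced_edges EF (insert w W)) VB
      (insert {\<phi> u, b} Bl) (ctr({\<phi> u, b} := u)) (far({\<phi> u, b} := b))"
    using \<open>u \<noteq> w\<close> by (simp add: induced_edges_insert_crossing[OF rf W uw])
qed

lemma waiter_forces_good_copy:
  assumes rf: "rooted_forest VF EF Rt" and VB: "finite VB" "card VF + card EF \<le> card VB"
  shows "partial_copy VF EF Rt \<rho> VB W \<phi> R \<Longrightarrow>
    blue_stars (W - leaves VF EF Rt) \<phi> (induced_edges EF W) VB Bl ctr far \<Longrightarrow>
    wc_forces (\<lambda>R Bl. \<exists>\<phi>. good_copy VF EF Rt \<rho> VB R Bl \<phi>) (complete_edges VB)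
      (card EF - card (induced_edges EF W)) R Bl"
proof (induction "card VF - card W" arbitrary: W \<phi> R Bl ctr far rule: less_induct)
  case less
  note pc = less.prems(1) and bs = less.prems(2)
  have W: "root_connected EF Rt W" "W \<subseteq> VF" using pc by (simp_all add: partial_copy_def)
  show ?case
  proof (cases "W = VF")
    case True
    then have "good_copy VF EF Rt \<rho> VB R Bl \<phi>" using good_copy_if_complete[OF rf] pc bs by blast
    then show ?thesis by (auto intro: wc_forces_if_holds)
  next
    case False
    have "Rt \<subseteq> W" using W(1) by (simp add: root_connected_def)
    then obtain u w where uw: "{u, w} \<in> EF" "u \<in> W" "w \<notin> W"
      using rooted_forest_crossing_edge[OF rf _ W(2) False] by blast
    let ?F = "induced_edges EF W" and ?F' = "induced_edges EF (insert w W)"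
    have "finite VF" "finite EF" using rooted_forestD(2)[OF rf] rooted_forest_finite_edges[OF rf] .
    then have fin: "finite W" "finite ?F"
      using finite_subset[OF W(2)] finite_subset[OF induced_edges_subset] by blast+
    have "card W < card VF" using W(2) False \<open>finite VF\<close> by (simp add: psubset_card_mono)
    have "{u, w} \<notin> ?F" using uw(3) by (simp add: induced_edges_def)
    then have "?F \<subset> EF" using uw(1) induced_edges_subset by blast
    then have "card ?F < card EF" using \<open>finite EF\<close> by (rule psubset_card_mono[rotated])
    have "card ?F' = Suc (card ?F)"
      using induced_edges_insert_crossing[OF rf W(1) uw] fin(2) \<open>{u, w} \<notin> ?F\<close> by simp
    then have rounds: "card EF - card ?F = Suc (card EF - card ?F')"
      using \<open>card ?F < card EF\<close> by linarith
    have shrink: "card VF - card (insert w W) < card VF - card W"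
      using \<open>card W < card VF\<close> fin(1) uw(3) by simp
    obtain x y where xy: "x \<in> VB - (\<phi> ` W \<union> far ` Bl)" "y \<in> VB - (\<phi> ` W \<union> far ` Bl)" "x \<noteq> y"
      using two_unused_vertices[OF VB fin(1) \<open>card W < card VF\<close> bs \<open>card ?F < card EF\<close>] by blast
    have next_round: "wc_forces (\<lambda>R Bl. \<exists>\<phi>. good_copy VF EF Rt \<rho> VB R Bl \<phi>) (complete_edges VB)
        (card EF - card ?F') (insert {\<phi> u, a} R) (insert {\<phi> u, b} Bl)"
      if "a \<in> VB - (\<phi> ` W \<union> far ` Bl)" "b \<in> VB - (\<phi> ` W \<union> far ` Bl)" for a b
    proof -
      have "a \<in> VB" "a \<notin> \<phi> ` W" "b \<in> VB" "b \<notin> \<phi> ` W" "b \<notin> far ` Bl"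
        using that by simp_all
      note step = waiter_round_invariant[OF rf pc bs uw this]
      show ?thesis by (rule less.hyps[OF shrink step])
    qed
    have free: "{\<phi> u, z} \<in> complete_edges VB - (R \<union> Bl)" if "z \<in> VB - (\<phi> ` W \<union> far ` Bl)" for z
      using fresh_edge_free[OF pc bs _ uw(2)] that by simp
    have "{\<phi> u, x} \<noteq> {\<phi> u, y}" using xy(3) by (simp add: doubleton_eq_iff)
    then show ?thesis unfolding rounds
      by (rule wc_forces_SucI[OF free[OF xy(1)] free[OF xy(2)] _ next_round[OF xy(1,2)]
            next_round[OF xy(2,1)]])
  qed
qed

theorem lemma3p20:
  fixes VF :: "'a set" and EF :: "'a set set" and Rt :: "'a set"
    and VB :: "'b set" and \<rho> :: "'a \<Rightarrow> 'b"
  assumes "rooted_forest VF EF Rt"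
    and "finite VB"
    and "card VB \<ge> card VF + card EF"
    and "inj_on \<rho> Rt" and "\<rho> ` Rt \<subseteq> VB"
  shows "wc_forces (\<lambda>R Bl. \<exists>\<phi>. good_copy VF EF Rt \<rho> VB R Bl \<phi>)
           (complete_edges VB) (card EF) {} {}"
proof -
  have "partial_copy VF EF Rt \<rho> VB Rt \<rho> {}" by (rule partial_copy_roots[OF assms(1,4,5)])
  moreover have "blue_stars (Rt - leaves VF EF Rt) \<rho> (induced_edges EF Rt) VB {} ctr far" for ctr far
    using blue_stars_empty induced_edges_roots[OF assms(1)] by simp
  ultimately show ?thesis
    using waiter_forces_good_copy[OF assms(1-3)] induced_edges_roots[OF assms(1)] by fastforce
qed

end
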